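(* Let $m\ge2$, let $D=\mathrm{diag}(d_1,\dots,d_m)$ with $d_1<d_2<\dots<d_m$, let $\beta_1,\beta_2$ be nonzero reals and $\mathbf v_1,\mathbf v_2\in\mathbb R^m$, and suppose $\{1,\dots,m\}$ is partitioned into sets $J_1,J_2,J_3$ such that $\mathbf v_1$ vanishes on $J_3$ and $\mathbf v_2$ vanishes on $J_1$. Let $M=D+\beta_1\mathbf v_1\mathbf v_1^T+\beta_2\mathbf v_2\mathbf v_2^T$ and assume no $d_i$ is an eigenvalue of $M$. Then for every $j\in\{1,\dots,m-1\}$ and $k\in\{1,\dots,m-j\}$, the number of eigenvalues of $M$ (counted with multiplicity) in $I_{j,j+k}$ is at least $k-1$ and at most $k+1$. In particular each interval $(d_j,d_{j+1})$ contains at most two eigenvalues of $M$.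
   Context: $I_{j,j+k}:=\bigcup_{i=j}^{j+k-1}(d_i,d_{i+1})=(d_j,d_{j+k})\setminus\{d_{j+1},\dots,d_{j+k-1}\}$. *)

theory Defs
  imports "Jordan_Normal_Form.Char_Poly"
begin

text \<open>Indices are 1-based as in the paper: d, v1, v2 are used on {1..m};
 matrix entry (i,j) (0-based, i,j < m) corresponds to paper indices (i+1, j+1).\<close>

definition rank2_mat :: "nat \<Rightarrow> (nat \<Rightarrow> real) \<Rightarrow> real \<Rightarrow> real \<Rightarrow> (nat \<Rightarrow> real) \<Rightarrow> (nat \<Rightarrow> real) \<Rightarrow> real mat" where
  "rank2_mat m d \<beta>1 \<beta>2 v1 v2 = mat m m (\<lambda>(i, j).
      (if i = j then d (i + 1) else 0)
      + \<beta>1 * v1 (i + 1) * v1 (j + 1) + \<beta>2 * v2 (i + 1) * v2 (j + 1))"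

definition I_int :: "(nat \<Rightarrow> real) \<Rightarrow> nat \<Rightarrow> nat \<Rightarrow> real set" where
  "I_int d j l = (\<Union>i\<in>{j..<l}. {d i<..<d (Suc i)})"

definition eig_count :: "real mat \<Rightarrow> real set \<Rightarrow> nat" where
  "eig_count A S = (\<Sum>x\<in>{x. eigenvalue A x \<and> x \<in> S}. order x (char_poly A))"

end

theory Submission
  imports Defs "Jordan_Normal_Form.Schur_Decomposition"
begin

text \<open>Write N_A(x) for the number of eigenvalues of a symmetric matrix A below x. If the quadratic
form Q_B dominates Q_A on the orthogonal complement of r vectors, then N_B(x) \<le> N_A(x) + r:
otherwise the orthonormal eigenvectors of B below x together with those of A from x on number more
than n + r, so some nonzero u lies in both spans and is orthogonal to the r vectors, and then
Q_B(u) - x|u|^2 < 0 \<le> Q_A(u) - x|u|^2 contradicts the domination (a min-max argument).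
In M = D + \<beta>1 v1 v1^T + \<beta>2 v2 v2^T let p and q be the numbers of positive and negative \<open>\<beta>\<close>s,
so p + q = 2; the form of M dominates that of D off the q negative directions and is dominated by
it off the p positive ones. As N_D jumps by one at each d_j and no d_j is an eigenvalue of M, this
gives j - p \<le> N_M(d_j) \<le> j - 1 + q, and subtracting these bounds at d_j and d_(j+k) confines
the number of eigenvalues in I_(j,j+k) to [k - 1, k + 1].\<close>

section \<open>Orthonormal diagonalisation of real symmetric matrices\<close>

definition orthonormal_mat :: "nat \<Rightarrow> real mat \<Rightarrow> bool" where
  "orthonormal_mat n Q \<longleftrightarrow> Q \<in> carrier_mat n n \<and> transpose_mat Q * Q = 1\<^sub>m n"

lemma orthonormal_mat_right_inverse:
  assumes "orthonormal_mat n Q"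
  shows "Q * transpose_mat Q = 1\<^sub>m n"
  using assms mat_mult_left_right_inverse[of "transpose_mat Q" n Q]
  unfolding orthonormal_mat_def by auto

lemma orthonormal_mat_mult:
  assumes P: "orthonormal_mat n P" and Q: "orthonormal_mat n Q"
  shows "orthonormal_mat n (P * Q)"
proof -
  have carr: "P \<in> carrier_mat n n" "Q \<in> carrier_mat n n"
    using P Q unfolding orthonormal_mat_def by auto
  have "transpose_mat (P * Q) * (P * Q) = transpose_mat Q * (transpose_mat P * P) * Q"
    using carr by (simp add: transpose_mult assoc_mult_mat[of _ n n _ n _ n])
  also have "\<dots> = 1\<^sub>m n"
    using P Q carr unfolding orthonormal_mat_def by simp
  finally show ?thesis using carr unfolding orthonormal_mat_def by auto
qed

lemma orthonormal_mat_with_first_col: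
  fixes v :: "real vec"
  assumes v: "v \<in> carrier_vec n" and v0: "v \<noteq> 0\<^sub>v n"
  shows "\<exists>U. orthonormal_mat n U \<and> col U 0 = (1 / sqrt (v \<bullet> v)) \<cdot>\<^sub>v v"
proof -
  interpret cof_vec_space n "TYPE(real)" .
  define b where "b = basis_completion v"
  define ws where "ws = gram_schmidt n b"
  from basis_completion[OF v v0, folded b_def]
  have dist_b: "distinct b" and indep: "\<not> lin_dep (set b)"
    and b: "set b \<subseteq> carrier_vec n" and hdb: "hd b = v" and len_b: "length b = n" by auto
  have n: "n > 0" using v v0 by (cases n) auto
  from hdb len_b n obtain vs where bv: "b = v # vs" by (cases b, auto)
  from gram_schmidt_result[OF b dist_b indep refl, folded ws_def]
  have ws: "set ws \<subseteq> carrier_vec n" "corthogonal ws" "length ws = n" by (auto simp: len_b)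
  from gram_schmidt_hd[OF v, of vs, folded bv] have hdws: "hd ws = v" unfolding ws_def .
  define us where "us = map (\<lambda>w. (1 / sqrt (w \<bullet> w)) \<cdot>\<^sub>v w) ws"
  define U where "U = mat_of_cols n us"
  have U: "U \<in> carrier_mat n n" unfolding U_def us_def using ws by auto
  have wsi: "\<And>i. i < n \<Longrightarrow> ws ! i \<in> carrier_vec n" using ws by auto
  have orth: "\<And>i j. i < n \<Longrightarrow> j < n \<Longrightarrow> ws ! i \<bullet> ws ! j = 0 \<longleftrightarrow> i \<noteq> j"
    using ws(2,3) unfolding corthogonal_def by auto
  have pos: "ws ! i \<bullet> ws ! i > 0" if i: "i < n" for i
    using conjugate_square_greater_0_vec[OF wsi[OF i]] orth[OF i i] by auto
  have colU: "\<And>i. i < n \<Longrightarrow> col U i = us ! i" unfolding U_def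
    using ws by (intro col_mat_of_cols) (auto simp: us_def wsi)
  have "transpose_mat U * U = 1\<^sub>m n"
  proof (rule eq_matI)
    fix i j assume "i < dim_row (1\<^sub>m n)" "j < dim_col (1\<^sub>m n)"
    hence i: "i < n" and j: "j < n" by auto
    have "(transpose_mat U * U) $$ (i,j) = us ! i \<bullet> us ! j"
      using U i j colU by simp
    also have "\<dots> = (ws ! i \<bullet> ws ! j) / (sqrt (ws!i \<bullet> ws!i) * sqrt (ws!j \<bullet> ws!j))"
      using i j ws(3) wsi[OF i] wsi[OF j] unfolding us_def by simp
    also have "\<dots> = 1\<^sub>m n $$ (i,j)"
      using orth[OF i j] pos[OF i] i j by (cases "i = j") auto
    finally show "(transpose_mat U * U) $$ (i,j) = 1\<^sub>m n $$ (i,j)" .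
  qed (use U in auto)
  moreover have "col U 0 = (1 / sqrt (v \<bullet> v)) \<cdot>\<^sub>v v"
    using colU[OF n] hdws ws(3) n unfolding us_def by (cases ws, auto)
  ultimately show ?thesis using U unfolding orthonormal_mat_def by blast
qed

lemma symmetric_deflation:
  fixes A :: "real mat"
  assumes A: "A \<in> carrier_mat n n" and sym: "transpose_mat A = A" and e: "eigenvalue A e"
  shows "\<exists>U A3. orthonormal_mat n U \<and> A3 \<in> carrier_mat (n - 1) (n - 1) \<and> transpose_mat A3 = A3
    \<and> transpose_mat U * A * U = four_block_mat (mat 1 1 (\<lambda>_. e)) (0\<^sub>m 1 (n - 1)) (0\<^sub>m (n - 1) 1) A3"
proof -
  obtain v where v: "v \<in> carrier_vec n" "v \<noteq> 0\<^sub>v n" and Av: "A *\<^sub>v v = e \<cdot>\<^sub>v v"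
    using e A unfolding eigenvalue_def eigenvector_def by auto
  have n: "n > 0" using v by (cases n) auto
  obtain U where U: "orthonormal_mat n U" and U0: "col U 0 = (1 / sqrt (v \<bullet> v)) \<cdot>\<^sub>v v"
    using orthonormal_mat_with_first_col[OF v] by blast
  have Uc: "U \<in> carrier_mat n n" and UU: "transpose_mat U * U = 1\<^sub>m n"
    using U unfolding orthonormal_mat_def by auto
  define A' where "A' = transpose_mat U * A * U"
  have A': "A' \<in> carrier_mat n n" unfolding A'_def using Uc A by auto
  have symA': "transpose_mat A' = A'" unfolding A'_def using Uc A sym
    by (simp add: transpose_mult[of _ n n _ n] assoc_mult_mat[of _ n n _ n _ n])
  have AU0: "A *\<^sub>v col U 0 = e \<cdot>\<^sub>v col U 0" unfolding U0 using A v Av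
    by (simp add: mult_mat_vec smult_smult_assoc mult.commute)
  have col0: "A' $$ (i, 0) = (if i = 0 then e else 0)" if i: "i < n" for i
  proof -
    have "A' $$ (i, 0) = col U i \<bullet> (A *\<^sub>v col U 0)"
      unfolding A'_def using Uc A i n
      by (simp add: assoc_mult_mat[of _ n n _ n _ n] col_mult2[of _ n n _ n] mult_mat_vec_def)
    also have "\<dots> = e * (transpose_mat U * U) $$ (i, 0)" unfolding AU0 using Uc i n by simp
    finally show ?thesis unfolding UU using i n by simp
  qed
  define A3 where "A3 = mat (n - 1) (n - 1) (\<lambda>(i, j). A' $$ (Suc i, Suc j))"
  have A'_sym_entry: "A' $$ (i, j) = A' $$ (j, i)" if "i < n" "j < n" for i j
    using that A' arg_cong[OF symA', of "\<lambda>B. B $$ (j, i)"] by simp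
  have "transpose_mat A3 = A3"
    using A'_sym_entry unfolding A3_def by (intro eq_matI) auto
  moreover have "A' = four_block_mat (mat 1 1 (\<lambda>_. e)) (0\<^sub>m 1 (n - 1)) (0\<^sub>m (n - 1) 1) A3"
  proof (rule eq_matI)
    fix i j assume ij: "i < dim_row (four_block_mat (mat 1 1 (\<lambda>_. e)) (0\<^sub>m 1 (n - 1)) (0\<^sub>m (n - 1) 1) A3)"
      "j < dim_col (four_block_mat (mat 1 1 (\<lambda>_. e)) (0\<^sub>m 1 (n - 1)) (0\<^sub>m (n - 1) 1) A3)"
    show "A' $$ (i, j) = four_block_mat (mat 1 1 (\<lambda>_. e)) (0\<^sub>m 1 (n - 1)) (0\<^sub>m (n - 1) 1) A3 $$ (i, j)"
      using ij col0 A'_sym_entry[of 0] n by (auto simp: A3_def)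
  qed (use A' n in \<open>auto simp: A3_def\<close>)
  moreover have "A3 \<in> carrier_mat (n - 1) (n - 1)" unfolding A3_def by simp
  ultimately show ?thesis using U unfolding A'_def by blast
qed

lemma orthonormal_mat_block_diag:
  assumes Q: "orthonormal_mat k Q" and a: "a \<in> carrier_mat 1 1" and B: "B \<in> carrier_mat k k"
  defines "P \<equiv> four_block_mat (1\<^sub>m 1) (0\<^sub>m 1 k) (0\<^sub>m k 1) Q"
  shows "orthonormal_mat (Suc k) P"
    and "transpose_mat P * four_block_mat a (0\<^sub>m 1 k) (0\<^sub>m k 1) B * P
       = four_block_mat a (0\<^sub>m 1 k) (0\<^sub>m k 1) (transpose_mat Q * B * Q)"
proof -
  have Qc: "Q \<in> carrier_mat k k" and QQ: "transpose_mat Q * Q = 1\<^sub>m k"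
    using Q unfolding orthonormal_mat_def by auto
  have PT: "transpose_mat P = four_block_mat (1\<^sub>m 1) (0\<^sub>m 1 k) (0\<^sub>m k 1) (transpose_mat Q)"
    unfolding P_def using Qc by (subst transpose_four_block_mat) auto
  have "transpose_mat P * P = 1\<^sub>m (Suc k)"
    unfolding PT unfolding P_def using Qc QQ
    by (subst mult_four_block_mat[of _ 1 1 _ k _ k _ _ 1 _ k]) auto
  then show "orthonormal_mat (Suc k) P"
    unfolding orthonormal_mat_def P_def using Qc by auto
  have "transpose_mat P * four_block_mat a (0\<^sub>m 1 k) (0\<^sub>m k 1) B
      = four_block_mat a (0\<^sub>m 1 k) (0\<^sub>m k 1) (transpose_mat Q * B)"
    unfolding PT using Qc a B by (subst mult_four_block_mat[of _ 1 1 _ k _ k _ _ 1 _ k]) auto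
  then show "transpose_mat P * four_block_mat a (0\<^sub>m 1 k) (0\<^sub>m k 1) B * P
       = four_block_mat a (0\<^sub>m 1 k) (0\<^sub>m k 1) (transpose_mat Q * B * Q)"
    unfolding P_def using Qc a B by (simp, subst mult_four_block_mat[of _ 1 1 _ k _ k _ _ 1 _ k]) auto
qed

lemma orthonormal_similar_char_poly:
  assumes "orthonormal_mat n U" "A \<in> carrier_mat n n"
  shows "char_poly (transpose_mat U * A * U) = char_poly A"
proof -
  have U: "U \<in> carrier_mat n n" "transpose_mat U * U = 1\<^sub>m n" "U * transpose_mat U = 1\<^sub>m n"
    using assms orthonormal_mat_right_inverse[OF assms(1)] unfolding orthonormal_mat_def by auto
  have "U * (transpose_mat U * A * U) * transpose_mat U = (U * transpose_mat U) * A * (U * transpose_mat U)"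
    using U(1) assms(2) by (simp add: assoc_mult_mat[of _ n n _ n _ n])
  also have "\<dots> = A" unfolding U(3) using assms(2) by simp
  finally have "A = U * (transpose_mat U * A * U) * transpose_mat U" ..
  with U assms(2) have "similar_mat_wit (transpose_mat U * A * U) A (transpose_mat U) U"
    by (intro similar_mat_witI[of _ _ n]) auto
  then have "similar_mat (transpose_mat U * A * U) A" unfolding similar_mat_def by blast
  then show ?thesis by (rule char_poly_similar)
qed

lemma symmetric_orthonormal_diagonalization:
  fixes A :: "real mat"
  assumes "A \<in> carrier_mat n n" "transpose_mat A = A" "char_poly A = (\<Prod>e \<leftarrow> es. [:-e, 1:])"
  shows "\<exists>Q. orthonormal_mat n Q \<and> diagonal_mat (transpose_mat Q * A * Q)"
  using assms
proof (induction es arbitrary: n A)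
  case Nil
  with degree_monic_char_poly[of A n] have "n = 0" by auto
  then show ?case
    by (intro exI[of _ "1\<^sub>m 0"]) (auto simp: orthonormal_mat_def diagonal_mat_def)
next
  case (Cons e es n A)
  have e: "eigenvalue A e" unfolding eigenvalue_root_char_poly[OF Cons.prems(1)] Cons.prems(3) by simp
  obtain U A3 where U: "orthonormal_mat n U" and A3: "A3 \<in> carrier_mat (n - 1) (n - 1)"
    and sym3: "transpose_mat A3 = A3"
    and UAU: "transpose_mat U * A * U = four_block_mat (mat 1 1 (\<lambda>_. e)) (0\<^sub>m 1 (n - 1)) (0\<^sub>m (n - 1) 1) A3"
    using symmetric_deflation[OF Cons.prems(1,2) e] by blast
  have n: "n = Suc (n - 1)"
    using e Cons.prems(1) unfolding eigenvalue_def eigenvector_def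
    by (cases n) auto
  have "char_poly (mat 1 1 (\<lambda>_. e)) = [:-e, 1:]"
    by (simp add: char_poly_defs det_def sign_def)
  moreover have "char_poly (transpose_mat U * A * U) = char_poly (mat 1 1 (\<lambda>_. e)) * char_poly A3"
    unfolding UAU by (rule char_poly_four_block_zeros_col[OF _ _ A3]) auto
  ultimately have "[:-e, 1:] * char_poly A3 = char_poly (transpose_mat U * A * U)"
    by simp
  also have "\<dots> = [:-e, 1:] * (\<Prod>e \<leftarrow> es. [:-e, 1:])"
    using orthonormal_similar_char_poly[OF U Cons.prems(1)] Cons.prems(3) by simp
  finally have "char_poly A3 = (\<Prod>e \<leftarrow> es. [:-e, 1:])"
    by (metis mult_cancel_left pCons_eq_0_iff zero_neq_one)
  then obtain Q3 where Q3: "orthonormal_mat (n - 1) Q3" and diag3: "diagonal_mat (transpose_mat Q3 * A3 * Q3)"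
    using Cons.IH[OF A3 sym3] by blast
  define P where "P = four_block_mat (1\<^sub>m 1) (0\<^sub>m 1 (n - 1)) (0\<^sub>m (n - 1) 1) Q3"
  have P: "orthonormal_mat n P"
    and PBP: "transpose_mat P * (transpose_mat U * A * U) * P
       = four_block_mat (mat 1 1 (\<lambda>_. e)) (0\<^sub>m 1 (n - 1)) (0\<^sub>m (n - 1) 1) (transpose_mat Q3 * A3 * Q3)"
    using orthonormal_mat_block_diag[OF Q3 _ A3, of "mat 1 1 (\<lambda>_. e)"] n unfolding UAU P_def by auto
  have carr: "U \<in> carrier_mat n n" "P \<in> carrier_mat n n"
    using U P unfolding orthonormal_mat_def by auto
  have "transpose_mat (U * P) * A * (U * P) = transpose_mat P * (transpose_mat U * A * U) * P"
    using carr Cons.prems(1) by (simp add: transpose_mult assoc_mult_mat[of _ n n _ n _ n])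
  then have "diagonal_mat (transpose_mat (U * P) * A * (U * P))"
    unfolding PBP using diag3 A3 Q3 unfolding diagonal_mat_def orthonormal_mat_def by auto
  then show ?case using orthonormal_mat_mult[OF U P] by blast
qed

lemma symmetric_eigenvalue_real:
  fixes A :: "real mat"
  assumes A: "A \<in> carrier_mat n n" and sym: "transpose_mat A = A"
    and a: "eigenvalue (map_mat complex_of_real A) a"
  shows "a \<in> \<real>"
proof -
  define C where "C = map_mat complex_of_real A"
  obtain w where w: "w \<in> carrier_vec n" "w \<noteq> 0\<^sub>v n" and Cw: "C *\<^sub>v w = a \<cdot>\<^sub>v w"
    using a A unfolding C_def eigenvalue_def eigenvector_def by auto
  have A_sym: "A $$ (i, j) = A $$ (j, i)" if "i < n" "j < n" for i j
    using that A arg_cong[OF sym, of "\<lambda>B. B $$ (j, i)"] by simp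
  define s where "s = (\<Sum>i<n. cnj (w $ i) * (C *\<^sub>v w) $ i)"
  define N where "N = (\<Sum>i<n. cnj (w $ i) * w $ i)"
  have s_eq: "s = (\<Sum>i<n. \<Sum>j<n. of_real (A $$ (i,j)) * cnj (w $ i) * w $ j)"
    unfolding s_def using w(1) A
    by (simp add: C_def scalar_prod_def sum_distrib_left mult.commute mult.left_commute lessThan_atLeast0)
  have "cnj s = (\<Sum>i<n. \<Sum>j<n. of_real (A $$ (i,j)) * w $ i * cnj (w $ j))"
    unfolding s_eq by (simp add: cnj_sum)
  also have "\<dots> = (\<Sum>j<n. \<Sum>i<n. of_real (A $$ (i,j)) * w $ i * cnj (w $ j))"
    by (rule sum.swap)
  also have "\<dots> = s"
    unfolding s_eq using A_sym by (intro sum.cong refl) (simp add: mult.commute mult.left_commute)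
  finally have s_real: "cnj s = s" .
  have N_eq: "N = of_real (\<Sum>i<n. (cmod (w $ i))\<^sup>2)"
    unfolding N_def of_real_sum by (intro sum.cong refl) (metis complex_norm_square mult.commute)
  obtain i where i: "i < n" "w $ i \<noteq> 0"
    using w by (metis carrier_vecD eq_vecI index_zero_vec(1,2))
  have "0 < (cmod (w $ i))\<^sup>2" using i by simp
  also have "\<dots> \<le> (\<Sum>i<n. (cmod (w $ i))\<^sup>2)" using i by (intro member_le_sum) auto
  finally have "N \<noteq> 0" unfolding N_eq of_real_eq_0_iff by linarith
  moreover have "s = a * N"
    unfolding s_def N_def Cw using w(1) by (simp add: sum_distrib_left mult.left_commute)
  ultimately have "a = s / N" by simp
  then have "cnj a = a" using s_real N_eq by simp
  then show ?thesis using Reals_cnj_iff by blast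
qed

lemma prod_linear_factors_of_real:
  assumes "\<forall>a \<in> set as. a \<in> \<real>"
  shows "(\<Prod>a \<leftarrow> as. [:-a, 1:]) = map_poly complex_of_real (\<Prod>e \<leftarrow> map Re as. [:-e, 1:])"
  using assms
proof (induction as)
  case (Cons a as)
  interpret of_real_poly: map_poly_inj_idom_hom "complex_of_real" ..
  have "a = of_real (Re a)" using Cons.prems by (simp add: complex_is_Real_iff complex_eq_iff)
  then have a: "[:-a, 1:] = map_poly complex_of_real [:-Re a, 1:]" by (simp add: map_poly_pCons)
  have "(\<Prod>b \<leftarrow> a # as. [:-b, 1:]) = [:-a, 1:] * (\<Prod>b \<leftarrow> as. [:-b, 1:])" by simp
  also have "\<dots> = map_poly complex_of_real ([:-Re a, 1:] * (\<Prod>e \<leftarrow> map Re as. [:-e, 1:]))"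
    using Cons.prems unfolding of_real_poly.hom_mult a[symmetric] by (simp add: Cons.IH)
  finally show ?case by simp
qed simp

lemma char_poly_symmetric_splits:
  fixes A :: "real mat"
  assumes A: "A \<in> carrier_mat n n" and sym: "transpose_mat A = A"
  shows "\<exists>es. char_poly A = (\<Prod>e \<leftarrow> es. [:-e, 1:])"
proof -
  define C where "C = map_mat complex_of_real A"
  have C: "C \<in> carrier_mat n n" using A by (simp add: C_def)
  obtain as where as: "char_poly C = (\<Prod>a \<leftarrow> as. [:-a, 1:])"
    using char_poly_factorized[OF C] by auto
  have real: "\<forall>a \<in> set as. a \<in> \<real>"
  proof
    fix a assume "a \<in> set as"
    then have "poly (char_poly C) a = 0" unfolding as by (induction as) auto
    then show "a \<in> \<real>"
      using symmetric_eigenvalue_real[OF A sym] eigenvalue_root_char_poly[OF C] unfolding C_def by auto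
  qed
  interpret of_real_poly: map_poly_inj_idom_hom "complex_of_real" ..
  have "map_poly complex_of_real (char_poly A) = char_poly C"
    unfolding C_def by (rule of_real_hom.char_poly_hom[OF A, symmetric])
  also have "\<dots> = map_poly complex_of_real (\<Prod>e \<leftarrow> map Re as. [:-e, 1:])"
    unfolding as using prod_linear_factors_of_real[OF real] .
  finally have "char_poly A = (\<Prod>e \<leftarrow> map Re as. [:-e, 1:])"
    by (rule of_real_poly.injectivity)
  then show ?thesis by blast
qed

definition orthonormal_family :: "nat \<Rightarrow> (nat \<Rightarrow> nat \<Rightarrow> real) \<Rightarrow> bool" where
  "orthonormal_family n q \<longleftrightarrow> (\<forall>l<n. \<forall>l'<n. (\<Sum>i<n. q l i * q l' i) = (if l = l' then 1 else 0))"

lemma prod_list_map_upt: "prod_list (map f [0..<n]) = (\<Prod>i<n. f i)"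
  by (simp add: prod.distinct_set_conv_list[symmetric] lessThan_atLeast0)

lemma char_poly_diagonal:
  fixes L :: "'a :: comm_ring_1 mat"
  assumes L: "L \<in> carrier_mat n n"
    and L_entry: "\<And>i j. i < n \<Longrightarrow> j < n \<Longrightarrow> L $$ (i, j) = (if i = j then lam i else 0)"
  shows "char_poly L = (\<Prod>l<n. [:-lam l, 1:])"
proof -
  have "char_poly L = (\<Prod>a \<leftarrow> diag_mat L. [:-a, 1:])"
    using L L_entry by (intro char_poly_upper_triangular) (auto simp: upper_triangular_def)
  also have "diag_mat L = map lam [0..<n]"
    unfolding diag_mat_def using L L_entry by auto
  finally show ?thesis by (simp only: map_map o_def prod_list_map_upt)
qed

lemma diagonal_conj_entry:
  fixes Q L :: "'a :: comm_ring mat"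
  assumes Q: "Q \<in> carrier_mat n n" and L: "L \<in> carrier_mat n n"
    and L_entry: "\<And>i j. i < n \<Longrightarrow> j < n \<Longrightarrow> L $$ (i, j) = (if i = j then lam i else 0)"
    and "i < n" "j < n"
  shows "(Q * L * transpose_mat Q) $$ (i, j) = (\<Sum>l<n. lam l * Q $$ (i, l) * Q $$ (j, l))"
proof -
  have QL: "(Q * L) $$ (i, l) = Q $$ (i, l) * lam l" if "l < n" for l
  proof -
    have "(Q * L) $$ (i, l) = (\<Sum>k<n. Q $$ (i, k) * L $$ (k, l))"
      using Q L that \<open>i < n\<close> by (simp add: scalar_prod_def lessThan_atLeast0)
    also have "\<dots> = (\<Sum>k<n. if k = l then Q $$ (i, l) * lam l else 0)"
      using L_entry that by (intro sum.cong) auto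
    finally show ?thesis using that by simp
  qed
  have "(Q * L * transpose_mat Q) $$ (i, j) = (\<Sum>l<n. (Q * L) $$ (i, l) * Q $$ (j, l))"
    using mult_carrier_mat[OF Q L] Q \<open>i < n\<close> \<open>j < n\<close>
    by (auto simp: scalar_prod_def lessThan_atLeast0 simp del: assoc_mult_mat intro!: sum.cong)
  also have "\<dots> = (\<Sum>l<n. lam l * Q $$ (i, l) * Q $$ (j, l))"
    using QL by (intro sum.cong) (auto simp: mult_ac)
  finally show ?thesis .
qed

lemma symmetric_spectral_decomposition:
  fixes A :: "real mat"
  assumes A: "A \<in> carrier_mat n n" and sym: "transpose_mat A = A"
  shows "\<exists>lam q. orthonormal_family n q
    \<and> (\<forall>i<n. \<forall>j<n. A $$ (i, j) = (\<Sum>l<n. lam l * q l i * q l j))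
    \<and> char_poly A = (\<Prod>l<n. [:-lam l, 1:])"
proof -
  obtain es where "char_poly A = (\<Prod>e \<leftarrow> es. [:-e, 1:])"
    using char_poly_symmetric_splits[OF A sym] by blast
  then obtain Q where Q: "orthonormal_mat n Q" and diag: "diagonal_mat (transpose_mat Q * A * Q)"
    using symmetric_orthonormal_diagonalization[OF A sym] by blast
  define L where "L = transpose_mat Q * A * Q"
  define lam where "lam l = L $$ (l, l)" for l
  define q where "q l i = Q $$ (i, l)" for l i
  have Qc: "Q \<in> carrier_mat n n" and L: "L \<in> carrier_mat n n"
    using Q A unfolding orthonormal_mat_def L_def by auto
  have L_entry: "L $$ (i, j) = (if i = j then lam i else 0)" if "i < n" "j < n" for i j
    using diag L that unfolding L_def[symmetric] diagonal_mat_def lam_def by auto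
  have orth: "orthonormal_family n q"
    unfolding orthonormal_family_def
  proof (intro allI impI)
    fix l l' assume "l < n" "l' < n"
    then have "(transpose_mat Q * Q) $$ (l, l') = (\<Sum>i<n. q l i * q l' i)"
      using Qc by (simp add: scalar_prod_def q_def lessThan_atLeast0)
    then show "(\<Sum>i<n. q l i * q l' i) = (if l = l' then 1 else 0)"
      using Q \<open>l < n\<close> \<open>l' < n\<close> unfolding orthonormal_mat_def by simp
  qed
  have "A = Q * L * transpose_mat Q"
  proof -
    have "Q * L * transpose_mat Q = (Q * transpose_mat Q) * A * (Q * transpose_mat Q)"
      unfolding L_def using Qc A by (simp add: assoc_mult_mat[of _ n n _ n _ n])
    then show ?thesis unfolding orthonormal_mat_right_inverse[OF Q] using A by simp
  qed
  then have "\<forall>i<n. \<forall>j<n. A $$ (i, j) = (\<Sum>l<n. lam l * q l i * q l j)"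
    using diagonal_conj_entry[OF Qc L L_entry] unfolding q_def by simp
  moreover have "char_poly A = (\<Prod>l<n. [:-lam l, 1:])"
    using orthonormal_similar_char_poly[OF Q A] char_poly_diagonal[OF L L_entry] unfolding L_def by simp
  ultimately show ?thesis using orth by blast
qed

section \<open>Counting eigenvalues with multiplicity\<close>

lemma order_prod_linear_factors:
  fixes lam :: "nat \<Rightarrow> real"
  shows "Polynomial.order x (\<Prod>l<n. [:-lam l, 1:]) = card {l. l < n \<and> lam l = x}"
proof (induction n)
  case (Suc n)
  have "(\<Prod>l<n. [:-lam l, 1:]) * [:-lam n, 1:] \<noteq> 0"
    unfolding mult_eq_0_iff by (simp add: prod_zero_iff)
  then have "Polynomial.order x ((\<Prod>l<n. [:-lam l, 1:]) * [:-lam n, 1:])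
      = Polynomial.order x (\<Prod>l<n. [:-lam l, 1:]) + Polynomial.order x [:-lam n, 1:]"
    by (rule order_mult)
  then have "Polynomial.order x (\<Prod>l<Suc n. [:-lam l, 1:])
      = Polynomial.order x (\<Prod>l<n. [:-lam l, 1:]) + Polynomial.order x [:-lam n, 1:]"
    by (simp add: lessThan_Suc mult.commute)
  moreover have "{l. l < Suc n \<and> lam l = x} = {l. l < n \<and> lam l = x} \<union> (if lam n = x then {n} else {})"
    by (auto simp: less_Suc_eq)
  ultimately show ?case using Suc.IH by (auto simp: order_linear')
qed simp

lemma eig_count_eq_card:
  assumes A: "A \<in> carrier_mat n n" and cp: "char_poly A = (\<Prod>l<n. [:-lam l, 1:])"
  shows "eig_count A S = card {l. l < n \<and> lam l \<in> S}"
proof -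
  define T where "T = {l. l < n \<and> lam l \<in> S}"
  have "{x. eigenvalue A x \<and> x \<in> S} = lam ` T"
    unfolding T_def eigenvalue_root_char_poly[OF A] cp poly_prod by (auto simp: prod_zero_iff)
  then have "eig_count A S = (\<Sum>x \<in> lam ` T. card {l \<in> T. lam l = x})"
    unfolding eig_count_def cp order_prod_linear_factors
    by (intro sum.cong refl arg_cong[of _ _ card]) (auto simp: T_def)
  also have "\<dots> = card (\<Union>x \<in> lam ` T. {l \<in> T. lam l = x})"
    by (rule card_UN_disjoint[symmetric]) (auto simp: T_def)
  also have "(\<Union>x \<in> lam ` T. {l \<in> T. lam l = x}) = T" by auto
  finally show ?thesis unfolding T_def .
qed

lemma finite_eigenvalues:
  assumes A: "A \<in> carrier_mat n n"
  shows "finite {x :: real. eigenvalue A x}"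
proof -
  have "char_poly A \<noteq> 0" using degree_monic_char_poly[OF A] by auto
  then show ?thesis
    unfolding eigenvalue_root_char_poly[OF A] by (rule poly_roots_finite)
qed

lemma eig_count_union:
  assumes A: "A \<in> carrier_mat n n" and disj: "S \<inter> T = {}"
  shows "eig_count A (S \<union> T) = eig_count A S + eig_count A T"
proof -
  have "{x. eigenvalue A x \<and> x \<in> S \<union> T} = {x. eigenvalue A x \<and> x \<in> S} \<union> {x. eigenvalue A x \<and> x \<in> T}"
    by auto
  then show ?thesis unfolding eig_count_def using finite_eigenvalues[OF A] disj
    by (simp add: sum.union_disjoint[symmetric] finite_subset disjoint_iff)
qed

lemma eig_count_cong:
  assumes "\<And>x. eigenvalue A x \<Longrightarrow> x \<in> S \<longleftrightarrow> x \<in> T"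
  shows "eig_count A S = eig_count A T"
  unfolding eig_count_def using assms by (metis (mono_tags))

section \<open>A min-max inequality for eigenvalue counts\<close>

lemma homogeneous_system_nontrivial_solution:
  fixes a :: "'e \<Rightarrow> 'v \<Rightarrow> real"
  assumes "finite V" "finite E" "card E < card V"
  shows "\<exists>c. (\<exists>v\<in>V. c v \<noteq> 0) \<and> (\<forall>j\<in>E. (\<Sum>v\<in>V. a j v * c v) = 0)"
  using assms
proof (induction V arbitrary: E a rule: finite_induct)
  case empty
  then show ?case by simp
next
  case (insert u V E a)
  show ?case
  proof (cases "\<forall>j\<in>E. a j u = 0")
    case True
    define c where "c v = (if v = u then 1 else 0 :: real)" for v
    have "(\<Sum>v\<in>insert u V. a j v * c v) = a j u" for j
      using insert.hyps by (auto simp: c_def intro!: sum.neutral)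
    then show ?thesis using True by (intro exI[of _ c]) (auto simp: c_def)
  next
    case False
    then obtain j0 where j0: "j0 \<in> E" "a j0 u \<noteq> 0" by auto
    define b where "b j v = a j v - a j u / a j0 u * a j0 v" for j v
    have "card (E - {j0}) < card V"
    proof -
      have "card E > 0" using j0 insert.prems card_gt_0_iff by blast
      then show ?thesis using j0 insert by (simp add: card_Diff_singleton)
    qed
    then obtain c' where c': "\<exists>v\<in>V. c' v \<noteq> 0" "\<forall>j\<in>E - {j0}. (\<Sum>v\<in>V. b j v * c' v) = 0"
      using insert.IH[of "E - {j0}" b] insert.prems by auto
    define s where "s = (\<Sum>v\<in>V. a j0 v * c' v)"
    define c where "c v = (if v = u then - s / a j0 u else c' v)" for v
    have sum_c: "(\<Sum>v\<in>insert u V. a j v * c v) = (\<Sum>v\<in>V. a j v * c' v) - a j u / a j0 u * s" for j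
    proof -
      have "(\<Sum>v\<in>V. a j v * c v) = (\<Sum>v\<in>V. a j v * c' v)"
        using insert.hyps by (intro sum.cong) (auto simp: c_def)
      then show ?thesis using insert.hyps by (simp add: c_def)
    qed
    have "(\<Sum>v\<in>insert u V. a j v * c v) = 0" if "j \<in> E" for j
    proof (cases "j = j0")
      case True
      then show ?thesis unfolding sum_c s_def using j0 by simp
    next
      case False
      then have "(\<Sum>v\<in>V. b j v * c' v) = 0" using c' that by auto
      then show ?thesis unfolding sum_c s_def b_def
        by (simp add: algebra_simps sum_subtractf sum_distrib_left)
    qed
    moreover have "\<exists>v\<in>insert u V. c v \<noteq> 0" using c' insert.hyps by (auto simp: c_def)
    ultimately show ?thesis by blast
  qed
qed

lemma card_neg_definite_add_card_nonneg_le: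
  fixes g h :: "nat \<Rightarrow> nat \<Rightarrow> real" and QA QB :: "(nat \<Rightarrow> real) \<Rightarrow> real"
    and ks :: "(nat \<Rightarrow> real) list"
  assumes fin: "finite S1" "finite S2"
    and neg: "\<And>c. \<exists>i\<in>S1. c i \<noteq> 0 \<Longrightarrow> QB (\<lambda>l. \<Sum>i\<in>S1. c i * g i l) < 0"
    and nonneg: "\<And>e. QA (\<lambda>l. \<Sum>i\<in>S2. e i * h i l) \<ge> 0"
    and indep: "\<And>e. \<forall>l<m. (\<Sum>i\<in>S2. e i * h i l) = 0 \<Longrightarrow> \<forall>i\<in>S2. e i = 0"
    and le: "\<And>y. \<forall>\<kappa>\<in>set ks. (\<Sum>l<m. \<kappa> l * y l) = 0 \<Longrightarrow> QA y \<le> QB y"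
    and local: "\<And>y z. \<forall>l<m. y l = z l \<Longrightarrow> QA y = QA z"
  shows "card S1 + card S2 \<le> m + length ks"
proof (rule ccontr)
  assume too_many: "\<not> ?thesis"
  define V where "V = S1 <+> S2"
  define E :: "(nat + nat) set" where "E = Inl ` {..<m} \<union> Inr ` {..<length ks}"
  \<comment> \<open>Equations Inl l: the two combinations agree in coordinate l;
      equations Inr j: the S1-combination is orthogonal to ks ! j.\<close>
  define a where "a eq var = (case eq of
       Inl l \<Rightarrow> (case var of Inl i \<Rightarrow> g i l | Inr i \<Rightarrow> - h i l)
     | Inr j \<Rightarrow> (case var of Inl i \<Rightarrow> (\<Sum>l<m. (ks ! j) l * g i l) | Inr i \<Rightarrow> 0))" for eq var
  have "card E = m + length ks"
    unfolding E_def by (subst card_Un_disjoint) (auto simp: card_image)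
  then have "card E < card V"
    using too_many fin unfolding V_def by (simp add: card_Plus)
  then obtain c where c: "\<exists>v\<in>V. c v \<noteq> 0" "\<forall>j\<in>E. (\<Sum>v\<in>V. a j v * c v) = 0"
    using homogeneous_system_nontrivial_solution[of V E a] fin unfolding V_def E_def by auto
  define y where "y l = (\<Sum>i\<in>S1. c (Inl i) * g i l)" for l
  define z where "z l = (\<Sum>i\<in>S2. c (Inr i) * h i l)" for l
  have yz: "\<forall>l<m. y l = z l"
  proof (intro allI impI)
    fix l assume "l < m"
    with c(2) have "(\<Sum>v\<in>V. a (Inl l) v * c v) = 0" unfolding E_def by auto
    then show "y l = z l" unfolding V_def using fin
      by (simp add: sum.Plus a_def y_def z_def sum_negf mult.commute)
  qed
  have "\<forall>\<kappa>\<in>set ks. (\<Sum>l<m. \<kappa> l * y l) = 0"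
  proof
    fix \<kappa> assume "\<kappa> \<in> set ks"
    then obtain j where j: "j < length ks" "\<kappa> = ks ! j" by (auto simp: in_set_conv_nth)
    with c(2) have "(\<Sum>v\<in>V. a (Inr j) v * c v) = 0" unfolding E_def by auto
    then have "(\<Sum>i\<in>S1. (\<Sum>l<m. \<kappa> l * g i l) * c (Inl i)) = 0"
      unfolding V_def using fin j by (simp add: sum.Plus a_def)
    then show "(\<Sum>l<m. \<kappa> l * y l) = 0" unfolding y_def
      by (simp add: sum_distrib_left sum_distrib_right sum.swap[of _ S1] mult.commute mult.left_commute)
  qed
  then have "QA y \<le> QB y" by (rule le)
  moreover have "QA y = QA z" using local yz by blast
  moreover have "QA z \<ge> 0" unfolding z_def by (rule nonneg)
  moreover have "\<exists>i\<in>S1. c (Inl i) \<noteq> 0"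
  proof (rule ccontr)
    assume c_Inl: "\<not> ?thesis"
    then have "\<forall>l<m. z l = 0" using yz by (simp add: y_def)
    then have "\<forall>i\<in>S2. c (Inr i) = 0" unfolding z_def by (rule indep)
    with c_Inl c(1) show False unfolding V_def by auto
  qed
  then have "QB y < 0" unfolding y_def by (rule neg)
  ultimately show False by linarith
qed

definition quad_form :: "nat \<Rightarrow> real mat \<Rightarrow> (nat \<Rightarrow> real) \<Rightarrow> real" where
  "quad_form n A y = (\<Sum>i<n. \<Sum>j<n. y i * A $$ (i, j) * y j)"

definition sq_norm :: "nat \<Rightarrow> (nat \<Rightarrow> real) \<Rightarrow> real" where
  "sq_norm n y = (\<Sum>i<n. (y i)\<^sup>2)"

lemma orthonormal_family_coord:
  assumes orth: "orthonormal_family n q" and S: "S \<subseteq> {..<n}" and l: "l < n"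
  shows "(\<Sum>i<n. q l i * (\<Sum>k\<in>S. c k * q k i)) = (if l \<in> S then c l else 0)"
proof -
  have "(\<Sum>i<n. q l i * (\<Sum>k\<in>S. c k * q k i)) = (\<Sum>i<n. \<Sum>k\<in>S. c k * (q l i * q k i))"
    by (simp add: sum_distrib_left mult.commute mult.left_commute)
  also have "\<dots> = (\<Sum>k\<in>S. c k * (\<Sum>i<n. q l i * q k i))"
    by (subst sum.swap) (simp add: sum_distrib_left)
  also have "\<dots> = (\<Sum>k\<in>S. if k = l then c l else 0)"
    using orth S l unfolding orthonormal_family_def by (intro sum.cong) auto
  also have "\<dots> = (if l \<in> S then c l else 0)"
    using finite_subset[OF S] by simp
  finally show ?thesis .
qed

lemma orthonormal_family_independent:
  assumes orth: "orthonormal_family n q" and S: "S \<subseteq> {..<n}"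
    and zero: "\<forall>l<n. (\<Sum>i\<in>S. e i * q i l) = 0"
  shows "\<forall>i\<in>S. e i = 0"
proof
  fix i assume "i \<in> S"
  then have "e i = (\<Sum>l<n. q i l * (\<Sum>k\<in>S. e k * q k l))"
    using orthonormal_family_coord[OF orth S, of i e] S by auto
  also have "\<dots> = 0" using zero by simp
  finally show "e i = 0" .
qed

lemma quad_form_spectral:
  assumes "\<forall>i<n. \<forall>j<n. A $$ (i, j) = (\<Sum>l<n. lam l * q l i * q l j)"
  shows "quad_form n A y = (\<Sum>l<n. lam l * (\<Sum>i<n. q l i * y i)\<^sup>2)"
proof -
  have "quad_form n A y = (\<Sum>i<n. \<Sum>j<n. \<Sum>l<n. y i * (lam l * q l i * q l j) * y j)"
    unfolding quad_form_def using assms by (auto simp: sum_distrib_left sum_distrib_right intro!: sum.cong)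
  also have "\<dots> = (\<Sum>i<n. \<Sum>l<n. \<Sum>j<n. y i * (lam l * q l i * q l j) * y j)"
    by (intro sum.cong refl sum.swap)
  also have "\<dots> = (\<Sum>l<n. \<Sum>i<n. \<Sum>j<n. y i * (lam l * q l i * q l j) * y j)"
    by (rule sum.swap)
  also have "\<dots> = (\<Sum>l<n. lam l * (\<Sum>i<n. q l i * y i)\<^sup>2)"
    by (simp add: power2_eq_square sum_distrib_left sum_distrib_right mult.commute mult.left_commute)
  finally show ?thesis .
qed

lemma eigen_combination_forms:
  assumes orth: "orthonormal_family n q"
    and rep: "\<forall>i<n. \<forall>j<n. A $$ (i, j) = (\<Sum>l<n. lam l * q l i * q l j)"
    and S: "S \<subseteq> {..<n}"
  shows "quad_form n A (\<lambda>i. \<Sum>k\<in>S. c k * q k i) = (\<Sum>l\<in>S. lam l * (c l)\<^sup>2)"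
    and "sq_norm n (\<lambda>i. \<Sum>k\<in>S. c k * q k i) = (\<Sum>l\<in>S. (c l)\<^sup>2)"
proof -
  have coord: "(\<Sum>i<n. q l i * (\<Sum>k\<in>S. c k * q k i)) = (if l \<in> S then c l else 0)" if "l < n" for l
    using orthonormal_family_coord[OF orth S that] .
  have "quad_form n A (\<lambda>i. \<Sum>k\<in>S. c k * q k i) = (\<Sum>l<n. lam l * (if l \<in> S then c l else 0)\<^sup>2)"
    unfolding quad_form_spectral[OF rep] by (intro sum.cong) (auto simp: coord)
  also have "\<dots> = (\<Sum>l\<in>S. lam l * (c l)\<^sup>2)"
    using S by (simp add: if_distrib[of "\<lambda>x. lam _ * x\<^sup>2"] sum.If_cases Int_absorb1 cong: if_cong)
  finally show "quad_form n A (\<lambda>i. \<Sum>k\<in>S. c k * q k i) = (\<Sum>l\<in>S. lam l * (c l)\<^sup>2)" .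
  have "sq_norm n (\<lambda>i. \<Sum>k\<in>S. c k * q k i) = (\<Sum>i<n. \<Sum>k\<in>S. c k * (q k i * (\<Sum>k\<in>S. c k * q k i)))"
    unfolding sq_norm_def power2_eq_square by (simp add: sum_distrib_right mult.assoc)
  also have "\<dots> = (\<Sum>k\<in>S. c k * (\<Sum>i<n. q k i * (\<Sum>k\<in>S. c k * q k i)))"
    by (subst sum.swap) (simp add: sum_distrib_left)
  also have "\<dots> = (\<Sum>k\<in>S. (c k)\<^sup>2)"
    using S coord by (intro sum.cong) (auto simp: power2_eq_square)
  finally show "sq_norm n (\<lambda>i. \<Sum>k\<in>S. c k * q k i) = (\<Sum>l\<in>S. (c l)\<^sup>2)" .
qed

lemma shifted_form_eigen_combination:
  assumes "orthonormal_family n q"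
    and "\<forall>i<n. \<forall>j<n. A $$ (i, j) = (\<Sum>l<n. lam l * q l i * q l j)"
    and "S \<subseteq> {..<n}"
  shows "quad_form n A (\<lambda>i. \<Sum>k\<in>S. c k * q k i) - x * sq_norm n (\<lambda>i. \<Sum>k\<in>S. c k * q k i)
    = (\<Sum>l\<in>S. (lam l - x) * (c l)\<^sup>2)"
  unfolding eigen_combination_forms[OF assms] by (simp add: sum_distrib_left algebra_simps sum_subtractf)

lemma card_eigen_indices_le:
  assumes oA: "orthonormal_family n qA"
    and rA: "\<forall>i<n. \<forall>j<n. A $$ (i, j) = (\<Sum>l<n. lamA l * qA l i * qA l j)"
    and oB: "orthonormal_family n qB"
    and rB: "\<forall>i<n. \<forall>j<n. B $$ (i, j) = (\<Sum>l<n. lamB l * qB l i * qB l j)"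
    and le: "\<And>y. \<forall>\<kappa>\<in>set ks. (\<Sum>l<n. \<kappa> l * y l) = 0 \<Longrightarrow> quad_form n A y \<le> quad_form n B y"
  shows "card {l. l < n \<and> lamB l < x} + card {l. l < n \<and> \<not> lamA l < x} \<le> n + length ks"
proof -
  \<comment> \<open>The form of B - x is negative definite on the eigenvectors of B below x,
      that of A - x is positive semidefinite on the eigenvectors of A from x on.\<close>
  define S1 where "S1 = {l. l < n \<and> lamB l < x}"
  define S2 where "S2 = {l. l < n \<and> \<not> lamA l < x}"
  have S1: "S1 \<subseteq> {..<n}" and S2: "S2 \<subseteq> {..<n}" unfolding S1_def S2_def by auto
  have "card S1 + card S2 \<le> n + length ks"
  proof (rule card_neg_definite_add_card_nonneg_le[where g = qB and h = qA
        and QB = "\<lambda>y. quad_form n B y - x * sq_norm n y" and QA = "\<lambda>y. quad_form n A y - x * sq_norm n y"])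
    show "finite S1" "finite S2" using S1 S2 finite_subset by auto
  next
    fix c :: "nat \<Rightarrow> real" assume "\<exists>i\<in>S1. c i \<noteq> 0"
    then obtain i where i: "i \<in> S1" "c i \<noteq> 0" by blast
    have "0 < (\<Sum>l\<in>S1. - ((lamB l - x) * (c l)\<^sup>2))"
      using i S1 finite_subset
      by (intro sum_pos2[of _ i]) (auto simp: S1_def mult_less_0_iff mult_nonpos_nonneg)
    then show "quad_form n B (\<lambda>l. \<Sum>i\<in>S1. c i * qB i l) - x * sq_norm n (\<lambda>l. \<Sum>i\<in>S1. c i * qB i l) < 0"
      unfolding shifted_form_eigen_combination[OF oB rB S1] sum_negf by simp
  next
    fix e :: "nat \<Rightarrow> real"
    have "0 \<le> (\<Sum>l\<in>S2. (lamA l - x) * (e l)\<^sup>2)"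
      by (intro sum_nonneg) (auto simp: S2_def)
    then show "0 \<le> quad_form n A (\<lambda>l. \<Sum>i\<in>S2. e i * qA i l) - x * sq_norm n (\<lambda>l. \<Sum>i\<in>S2. e i * qA i l)"
      unfolding shifted_form_eigen_combination[OF oA rA S2] .
  next
    fix e :: "nat \<Rightarrow> real"
    show "\<forall>l<n. (\<Sum>i\<in>S2. e i * qA i l) = 0 \<Longrightarrow> \<forall>i\<in>S2. e i = 0"
      by (rule orthonormal_family_independent[OF oA S2])
  next
    fix y z :: "nat \<Rightarrow> real" assume "\<forall>l<n. y l = z l"
    then show "quad_form n A y - x * sq_norm n y = quad_form n A z - x * sq_norm n z"
      unfolding quad_form_def sq_norm_def by simp
  qed (use le in auto)
  then show ?thesis unfolding S1_def S2_def .
qed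

lemma eig_count_lessThan_le_of_quad_form_le:
  fixes A B :: "real mat"
  assumes A: "A \<in> carrier_mat n n" "transpose_mat A = A"
    and B: "B \<in> carrier_mat n n" "transpose_mat B = B"
    and le: "\<And>y. \<forall>\<kappa>\<in>set ks. (\<Sum>l<n. \<kappa> l * y l) = 0 \<Longrightarrow> quad_form n A y \<le> quad_form n B y"
  shows "eig_count B {..<x} \<le> eig_count A {..<x} + length ks"
proof -
  obtain lamA qA where oA: "orthonormal_family n qA"
    and rA: "\<forall>i<n. \<forall>j<n. A $$ (i, j) = (\<Sum>l<n. lamA l * qA l i * qA l j)"
    and cA: "char_poly A = (\<Prod>l<n. [:-lamA l, 1:])"
    using symmetric_spectral_decomposition[OF A] by blast
  obtain lamB qB where oB: "orthonormal_family n qB"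
    and rB: "\<forall>i<n. \<forall>j<n. B $$ (i, j) = (\<Sum>l<n. lamB l * qB l i * qB l j)"
    and cB: "char_poly B = (\<Prod>l<n. [:-lamB l, 1:])"
    using symmetric_spectral_decomposition[OF B] by blast
  have "card {l. l < n \<and> \<not> lamA l < x} + eig_count A {..<x} = n"
  proof -
    have "{l. l < n \<and> \<not> lamA l < x} \<union> {l. l < n \<and> lamA l \<in> {..<x}} = {..<n}" by auto
    then show ?thesis unfolding eig_count_eq_card[OF A(1) cA]
      by (subst card_Un_disjoint[symmetric]) auto
  qed
  moreover have "card {l. l < n \<and> lamB l < x} = eig_count B {..<x}"
    unfolding eig_count_eq_card[OF B(1) cB] by simp
  ultimately show ?thesis using card_eigen_indices_le[where ks = ks and x = x, OF oA rA oB rB le] by linarith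
qed

lemma exists_greater_separating_finite:
  fixes x :: real
  assumes "finite F"
  shows "\<exists>x' > x. \<forall>e\<in>F. e \<le> x \<longleftrightarrow> e < x'"
proof -
  define x' where "x' = Min (insert (x + 1) {e \<in> F. x < e})"
  have fin: "finite (insert (x + 1) {e \<in> F. x < e})" using assms by simp
  have "x < x'" unfolding x'_def using fin by (subst Min_gr_iff) auto
  moreover have "e \<le> x \<longleftrightarrow> e < x'" if "e \<in> F" for e
  proof
    assume "e \<le> x" then show "e < x'" using \<open>x < x'\<close> by simp
  next
    assume "e < x'"
    have "\<not> x < e"
    proof
      assume "x < e"
      then have "x' \<le> e" unfolding x'_def using fin that by (intro Min_le) auto
      with \<open>e < x'\<close> show False by simp
    qed
    then show "e \<le> x" by simp
  qed
  ultimately show ?thesis by blast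
qed

lemma eig_count_atMost_le_of_quad_form_le:
  fixes A B :: "real mat"
  assumes A: "A \<in> carrier_mat n n" "transpose_mat A = A"
    and B: "B \<in> carrier_mat n n" "transpose_mat B = B"
    and le: "\<And>y. \<forall>\<kappa>\<in>set ks. (\<Sum>l<n. \<kappa> l * y l) = 0 \<Longrightarrow> quad_form n A y \<le> quad_form n B y"
  shows "eig_count B {..x} \<le> eig_count A {..x} + length ks"
proof -
  obtain x' where "x' > x"
    and x': "\<forall>e \<in> {e. eigenvalue A e} \<union> {e. eigenvalue B e}. e \<le> x \<longleftrightarrow> e < x'"
    using exists_greater_separating_finite finite_eigenvalues[OF A(1)] finite_eigenvalues[OF B(1)]
    by (metis finite_Un)
  have "eig_count A {..x} = eig_count A {..<x'}" "eig_count B {..x} = eig_count B {..<x'}"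
    using x' by (auto intro: eig_count_cong)
  with eig_count_lessThan_le_of_quad_form_le[OF A B le] show ?thesis by simp
qed

lemma eig_count_signed_perturbation:
  fixes D M :: "real mat" and ws :: "(real \<times> (nat \<Rightarrow> real)) list"
  assumes D: "D \<in> carrier_mat n n" "transpose_mat D = D"
    and M: "M \<in> carrier_mat n n" "transpose_mat M = M"
    and form: "\<And>y. quad_form n M y = quad_form n D y + (\<Sum>(\<beta>, w) \<leftarrow> ws. \<beta> * (\<Sum>l<n. w l * y l)\<^sup>2)"
  shows "eig_count M {..<x} \<le> eig_count D {..<x} + length (filter (\<lambda>(\<beta>, w). \<beta> < 0) ws)"
    and "eig_count D {..x} \<le> eig_count M {..x} + length (filter (\<lambda>(\<beta>, w). 0 < \<beta>) ws)"
proof -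
  \<comment> \<open>Orthogonally to the directions of one sign, the perturbation has the other sign.\<close>
  have "quad_form n D y \<le> quad_form n M y"
    if perp: "\<forall>\<kappa>\<in>set (map snd (filter (\<lambda>(\<beta>, w). \<beta> < 0) ws)). (\<Sum>l<n. \<kappa> l * y l) = 0" for y
  proof -
    have "0 \<le> \<beta> * (\<Sum>l<n. w l * y l)\<^sup>2" if "(\<beta>, w) \<in> set ws" for \<beta> w
    proof (cases "\<beta> < 0")
      case True
      then have "w \<in> set (map snd (filter (\<lambda>(\<beta>, w). \<beta> < 0) ws))" using that by force
      then have "(\<Sum>l<n. w l * y l) = 0" by (rule perp[rule_format])
      then show ?thesis by simp
    qed simp
    then have "0 \<le> (\<Sum>(\<beta>, w) \<leftarrow> ws. \<beta> * (\<Sum>l<n. w l * y l)\<^sup>2)"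
      by (intro sum_list_nonneg) auto
    then show ?thesis unfolding form by simp
  qed
  then have "eig_count M {..<x} \<le> eig_count D {..<x} + length (map snd (filter (\<lambda>(\<beta>, w). \<beta> < 0) ws))"
    by (rule eig_count_lessThan_le_of_quad_form_le[OF D M])
  then show "eig_count M {..<x} \<le> eig_count D {..<x} + length (filter (\<lambda>(\<beta>, w). \<beta> < 0) ws)"
    by simp
  have "quad_form n M y \<le> quad_form n D y"
    if perp: "\<forall>\<kappa>\<in>set (map snd (filter (\<lambda>(\<beta>, w). 0 < \<beta>) ws)). (\<Sum>l<n. \<kappa> l * y l) = 0" for y
  proof -
    have "\<beta> * (\<Sum>l<n. w l * y l)\<^sup>2 \<le> 0" if "(\<beta>, w) \<in> set ws" for \<beta> w
    proof (cases "0 < \<beta>")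
      case True
      then have "w \<in> set (map snd (filter (\<lambda>(\<beta>, w). 0 < \<beta>) ws))" using that by force
      then have "(\<Sum>l<n. w l * y l) = 0" by (rule perp[rule_format])
      then show ?thesis by simp
    qed (simp add: mult_nonpos_nonneg)
    then have "(\<Sum>(\<beta>, w) \<leftarrow> ws. \<beta> * (\<Sum>l<n. w l * y l)\<^sup>2) \<le> 0"
      by (intro sum_list_nonpos) auto
    then show ?thesis unfolding form by simp
  qed
  then have "eig_count D {..x} \<le> eig_count M {..x} + length (map snd (filter (\<lambda>(\<beta>, w). 0 < \<beta>) ws))"
    by (rule eig_count_atMost_le_of_quad_form_le[OF M D])
  then show "eig_count D {..x} \<le> eig_count M {..x} + length (filter (\<lambda>(\<beta>, w). 0 < \<beta>) ws)"
    by simp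
qed

section \<open>Interlacing for the rank-two perturbation\<close>

lemma strict_mono_on_atLeastAtMost_SucI:
  fixes f :: "nat \<Rightarrow> 'a :: order"
  assumes "\<And>i. a \<le> i \<Longrightarrow> i < b \<Longrightarrow> f i < f (Suc i)"
  shows "strict_mono_on {a..b} f"
proof (rule strict_mono_onI)
  fix r s assume "r \<in> {a..b}" "s \<in> {a..b}" "r < s"
  then have "Suc r \<le> s" "a \<le> r" "s \<le> b" by auto
  then show "f r < f s"
  proof (induction s rule: dec_induct)
    case base
    then show ?case using assms by simp
  next
    case (step k)
    then show ?case using assms[of k] less_trans by fastforce
  qed
qed

lemma I_int_subset_diff_points:
  assumes mono: "strict_mono_on {j..l} d"
  shows "I_int d j l \<subseteq> {d j<..<d l} - d ` {j<..<l}"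
proof
  have le_iff: "d a \<le> d b \<longleftrightarrow> a \<le> b" if "a \<in> {j..l}" "b \<in> {j..l}" for a b
    using strict_mono_on_less_eq[OF mono that] .
  fix x assume "x \<in> I_int d j l"
  then obtain i where i: "j \<le> i" "i < l" "d i < x" "x < d (Suc i)" unfolding I_int_def by auto
  have "d j \<le> d i" "d (Suc i) \<le> d l" using i by (auto simp: le_iff)
  moreover have "x \<notin> d ` {j<..<l}"
  proof
    assume "x \<in> d ` {j<..<l}"
    then obtain k where k: "k \<in> {j<..<l}" "x = d k" by auto
    have "d k \<le> d i \<or> d (Suc i) \<le> d k"
      using i k by (cases "k \<le> i") (auto simp: le_iff)
    then show False using i k by auto
  qed
  ultimately show "x \<in> {d j<..<d l} - d ` {j<..<l}" using i by simp
qed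

lemma diff_points_subset_I_int:
  assumes "j \<le> l"
  shows "{d j<..<d l} - d ` {j<..<l} \<subseteq> I_int d j l"
proof
  fix x assume x: "x \<in> {d j<..<d l} - d ` {j<..<l}"
  define F where "F = {i. j \<le> i \<and> i < l \<and> d i < x}"
  define i where "i = Max F"
  have "j < l" using x assms by (cases "j = l") auto
  then have "j \<in> F" using x by (simp add: F_def)
  moreover have "finite F" by (simp add: F_def)
  ultimately have "i \<in> F" and i_max: "\<And>k. k \<in> F \<Longrightarrow> k \<le> i"
    unfolding i_def by (auto intro: Max_in Max_ge)
  then have i: "j \<le> i" "i < l" "d i < x" by (auto simp: F_def)
  have "x < d (Suc i)"
  proof (cases "Suc i = l")
    case True
    then show ?thesis using x by simp
  next
    case False
    then have "Suc i \<notin> F" "Suc i \<in> {j<..<l}" using i_max[of "Suc i"] i by auto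
    then show ?thesis using x i by (auto simp: F_def)
  qed
  then show "x \<in> I_int d j l" unfolding I_int_def using i by auto
qed

lemma I_int_eq_diff_points:
  assumes "strict_mono_on {j..l} d" "j \<le> l"
  shows "I_int d j l = {d j<..<d l} - d ` {j<..<l}"
  using I_int_subset_diff_points[OF assms(1)] diff_points_subset_I_int[OF assms(2)] by (rule equalityI)

lemma eig_count_lessThan_split_I_int:
  assumes A: "A \<in> carrier_mat n n" and mono: "strict_mono_on {j..l} d" and "j \<le> l"
    and no_ev: "\<And>i. i \<in> {j..l} \<Longrightarrow> \<not> eigenvalue A (d i)"
  shows "eig_count A {..<d l} = eig_count A {..<d j} + eig_count A (I_int d j l)"
proof -
  have "d j \<le> d l" using strict_mono_on_less_eq[OF mono, of j l] \<open>j \<le> l\<close> by simp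
  have "eig_count A {..<d l} = eig_count A ({..<d j} \<union> I_int d j l)"
  proof (rule eig_count_cong)
    fix x assume "eigenvalue A x"
    then have "x \<noteq> d j" "x \<notin> d ` {j<..<l}" using no_ev \<open>j \<le> l\<close> by auto
    then show "x \<in> {..<d l} \<longleftrightarrow> x \<in> {..<d j} \<union> I_int d j l"
      using \<open>d j \<le> d l\<close> unfolding I_int_eq_diff_points[OF mono \<open>j \<le> l\<close>] by auto
  qed
  also have "\<dots> = eig_count A {..<d j} + eig_count A (I_int d j l)"
    by (rule eig_count_union[OF A]) (auto simp: I_int_eq_diff_points[OF mono \<open>j \<le> l\<close>])
  finally show ?thesis .
qed

definition diag_of_fun :: "nat \<Rightarrow> (nat \<Rightarrow> real) \<Rightarrow> real mat" where
  "diag_of_fun m d = mat m m (\<lambda>(i, j). if i = j then d (i + 1) else 0)"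

lemma quad_form_rank2_mat:
  "quad_form m (rank2_mat m d \<beta>1 \<beta>2 v1 v2) y = quad_form m (diag_of_fun m d) y
    + (\<Sum>(\<beta>, w) \<leftarrow> [(\<beta>1, \<lambda>l. v1 (l + 1)), (\<beta>2, \<lambda>l. v2 (l + 1))]. \<beta> * (\<Sum>l<m. w l * y l)\<^sup>2)"
proof -
  have square: "(\<Sum>l<m. w l * y l)\<^sup>2 = (\<Sum>i<m. \<Sum>j<m. y i * (w i * w j) * y j)" for w :: "nat \<Rightarrow> real"
    by (simp add: power2_eq_square sum_distrib_left sum_distrib_right mult.commute mult.left_commute)
  have perturbation: "(\<Sum>(\<beta>, w) \<leftarrow> [(\<beta>1, \<lambda>l. v1 (l + 1)), (\<beta>2, \<lambda>l. v2 (l + 1))]. \<beta> * (\<Sum>l<m. w l * y l)\<^sup>2)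
      = \<beta>1 * (\<Sum>l<m. v1 (l + 1) * y l)\<^sup>2 + \<beta>2 * (\<Sum>l<m. v2 (l + 1) * y l)\<^sup>2"
    by simp
  show ?thesis
    unfolding perturbation
    unfolding quad_form_def square sum_distrib_left[of \<beta>1] sum_distrib_left[of \<beta>2] sum.distrib[symmetric]
    by (intro sum.cong refl) (simp add: rank2_mat_def diag_of_fun_def algebra_simps)
qed

lemma char_poly_diag_of_fun: "char_poly (diag_of_fun m d) = (\<Prod>l<m. [:-d (l + 1), 1:])"
  by (rule char_poly_diagonal) (auto simp: diag_of_fun_def)

lemma eig_count_diag_of_fun:
  assumes mono: "strict_mono_on {1..m} d" and j: "j \<in> {1..m}"
  shows "eig_count (diag_of_fun m d) {..<d j} = j - 1"
    and "eig_count (diag_of_fun m d) {..d j} = j"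
proof -
  have D: "diag_of_fun m d \<in> carrier_mat m m" by (simp add: diag_of_fun_def)
  have "{l. l < m \<and> d (l + 1) \<in> {..<d j}} = {..<j - 1}"
    using strict_mono_on_less[OF mono _ j] j by auto
  then show "eig_count (diag_of_fun m d) {..<d j} = j - 1"
    by (simp add: eig_count_eq_card[OF D char_poly_diag_of_fun])
  have "{l. l < m \<and> d (l + 1) \<in> {..d j}} = {..<j}"
    using strict_mono_on_less_eq[OF mono _ j] j by auto
  then show "eig_count (diag_of_fun m d) {..d j} = j"
    by (simp add: eig_count_eq_card[OF D char_poly_diag_of_fun])
qed

lemma rank2_mat_eig_count_below_d:
  assumes mono: "strict_mono_on {1..m} d" and "\<beta>1 \<noteq> 0" "\<beta>2 \<noteq> 0"
    and no_ev: "\<And>i. i \<in> {1..m} \<Longrightarrow> \<not> eigenvalue (rank2_mat m d \<beta>1 \<beta>2 v1 v2) (d i)"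
  obtains p q where "p + q = 2"
    and "\<And>j. j \<in> {1..m} \<Longrightarrow> j \<le> eig_count (rank2_mat m d \<beta>1 \<beta>2 v1 v2) {..<d j} + p"
    and "\<And>j. j \<in> {1..m} \<Longrightarrow> eig_count (rank2_mat m d \<beta>1 \<beta>2 v1 v2) {..<d j} + 1 \<le> j + q"
proof -
  define M where "M = rank2_mat m d \<beta>1 \<beta>2 v1 v2"
  define D where "D = diag_of_fun m d"
  define ws where "ws = [(\<beta>1, \<lambda>l. v1 (l + 1)), (\<beta>2, \<lambda>l. v2 (l + 1))]"
  define p where "p = length (filter (\<lambda>(\<beta>, w). 0 < \<beta>) ws)"
  define q where "q = length (filter (\<lambda>(\<beta>, w). \<beta> < 0) ws)"
  have "p + q = 2"
    using \<open>\<beta>1 \<noteq> 0\<close> \<open>\<beta>2 \<noteq> 0\<close> unfolding p_def q_def ws_def by auto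
  have D: "D \<in> carrier_mat m m" "transpose_mat D = D"
    unfolding D_def diag_of_fun_def by (auto intro: eq_matI)
  have M: "M \<in> carrier_mat m m" "transpose_mat M = M"
    unfolding M_def rank2_mat_def by (auto intro: eq_matI)
  note perturbation = eig_count_signed_perturbation[OF D M, of ws]
  have "j \<le> eig_count M {..<d j} + p" "eig_count M {..<d j} + 1 \<le> j + q" if j: "j \<in> {1..m}" for j
  proof -
    have "eig_count M {..d j} = eig_count M {..<d j}"
      using no_ev[OF j] unfolding M_def by (intro eig_count_cong) (fastforce simp: le_less)
    then show "j \<le> eig_count M {..<d j} + p" "eig_count M {..<d j} + 1 \<le> j + q"
      using perturbation[of "d j"] eig_count_diag_of_fun[OF mono j] j
      unfolding p_def q_def D_def M_def ws_def quad_form_rank2_mat by auto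
  qed
  with \<open>p + q = 2\<close> show ?thesis using that unfolding M_def by blast
qed

lemma rank2_mat_eig_count_I_int:
  assumes mono: "strict_mono_on {1..m} d" and "\<beta>1 \<noteq> 0" "\<beta>2 \<noteq> 0"
    and no_ev: "\<And>i. i \<in> {1..m} \<Longrightarrow> \<not> eigenvalue (rank2_mat m d \<beta>1 \<beta>2 v1 v2) (d i)"
    and jk: "1 \<le> j" "1 \<le> k" "j + k \<le> m"
  shows "k - 1 \<le> eig_count (rank2_mat m d \<beta>1 \<beta>2 v1 v2) (I_int d j (j + k))"
    and "eig_count (rank2_mat m d \<beta>1 \<beta>2 v1 v2) (I_int d j (j + k)) \<le> k + 1"
proof -
  define M where "M = rank2_mat m d \<beta>1 \<beta>2 v1 v2"
  obtain p q where "p + q = 2"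
    and lower: "\<And>j. j \<in> {1..m} \<Longrightarrow> j \<le> eig_count M {..<d j} + p"
    and upper: "\<And>j. j \<in> {1..m} \<Longrightarrow> eig_count M {..<d j} + 1 \<le> j + q"
    using rank2_mat_eig_count_below_d[OF mono assms(2,3) no_ev] unfolding M_def by blast
  have j: "j \<in> {1..m}" "j + k \<in> {1..m}" using jk by auto
  have "eig_count M {..<d (j + k)} = eig_count M {..<d j} + eig_count M (I_int d j (j + k))"
    using jk no_ev unfolding M_def
    by (intro eig_count_lessThan_split_I_int monotone_on_subset[OF mono]) (auto simp: rank2_mat_def)
  with lower[OF j(1)] upper[OF j(1)] lower[OF j(2)] upper[OF j(2)] \<open>p + q = 2\<close> jk
  show "k - 1 \<le> eig_count M (I_int d j (j + k))" "eig_count M (I_int d j (j + k)) \<le> k + 1"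
    unfolding M_def by auto
qed

theorem lemma1:
  fixes m :: nat and d v1 v2 :: "nat \<Rightarrow> real" and \<beta>1 \<beta>2 :: real
    and J1 J2 J3 :: "nat set"
  assumes "m \<ge> 2"
    and "\<And>i. 1 \<le> i \<Longrightarrow> i < m \<Longrightarrow> d i < d (i + 1)"
    and "\<beta>1 \<noteq> 0" and "\<beta>2 \<noteq> 0"
    and "J1 \<union> J2 \<union> J3 = {1..m}"
    and "J1 \<inter> J2 = {}" and "J1 \<inter> J3 = {}" and "J2 \<inter> J3 = {}"
    and "\<And>i. i \<in> J3 \<Longrightarrow> v1 i = 0"
    and "\<And>i. i \<in> J1 \<Longrightarrow> v2 i = 0"
    and "\<And>i. i \<in> {1..m} \<Longrightarrow> \<not> eigenvalue (rank2_mat m d \<beta>1 \<beta>2 v1 v2) (d i)"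
  shows "(\<forall>j\<in>{1..m-1}. \<forall>k\<in>{1..m-j}.
            k - 1 \<le> eig_count (rank2_mat m d \<beta>1 \<beta>2 v1 v2) (I_int d j (j + k))
          \<and> eig_count (rank2_mat m d \<beta>1 \<beta>2 v1 v2) (I_int d j (j + k)) \<le> k + 1)
       \<and> (\<forall>j\<in>{1..m-1}. eig_count (rank2_mat m d \<beta>1 \<beta>2 v1 v2) {d j<..<d (j + 1)} \<le> 2)"
proof -
  have mono: "strict_mono_on {1..m} d"
    using assms(2) by (intro strict_mono_on_atLeastAtMost_SucI) simp
  note interval = rank2_mat_eig_count_I_int[OF mono assms(3,4,11)]
  show ?thesis
  proof (intro conjI ballI)
    fix j k assume "j \<in> {1..m-1}" "k \<in> {1..m-j}"
    then show "k - 1 \<le> eig_count (rank2_mat m d \<beta>1 \<beta>2 v1 v2) (I_int d j (j + k))"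
      "eig_count (rank2_mat m d \<beta>1 \<beta>2 v1 v2) (I_int d j (j + k)) \<le> k + 1"
      using interval by auto
  next
    fix j assume "j \<in> {1..m-1}"
    then have "eig_count (rank2_mat m d \<beta>1 \<beta>2 v1 v2) (I_int d j (j + 1)) \<le> 1 + 1"
      using interval(2)[of j 1] by auto
    then show "eig_count (rank2_mat m d \<beta>1 \<beta>2 v1 v2) {d j<..<d (j + 1)} \<le> 2"
      unfolding I_int_def by simp
  qed
qed

end
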